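(* Let $n,d$ be positive integers and let $T=(T_1,\ldots,T_d)$ be a commuting contractive operator-valued multishift on $\ell^2_{\mathbb C^n}(\mathbb N^d)$ whose operator weights are invertible $n\times n$ diagonal matrices. Then $T$ satisfies the von Neumann's inequality, i.e. $\|p(T)\|\le\sup_{z\in\mathbb D^d}|p(z)|$ for every polynomial $p\in\mathbb C[z_1,\ldots,z_d]$.
   Context: $\mathbb N$ denotes the nonnegative integers; $\varepsilon_j\in\mathbb N^d$ has $1$ in the $j$-th place and $0$ elsewhere; $\mathbb D^d$ is the open unit polydisc. $\ell^2_{H}(\mathbb N^d)=\bigoplus_{\alpha\in\mathbb N^d}H$. Given bounded operators $A^{(j)}_\alpha:H\to H$ ($\alpha\in\mathbb N^d$, $j=1,\ldots,d$), the operator-valued multishift with these operator weights is the $d$-tuple defined by $T_j(\oplus_\alpha x_\alpha)=\oplus_\alpha A^{(j)}_{\alpha-\varepsilon_j}x_{\alpha-\varepsilon_j}$ (the term being $0$ when $\alpha_j=0$). It is a commuting operator-valued multishift if $\sup_\alpha\|A^{(j)}_\alpha\|<\infty$ for each $j$ and $A^{(i)}_{\alpha+\varepsilon_j}A^{(j)}_\alpha=A^{(j)}_{\alpha+\varepsilon_i}A^{(i)}_\alpha$ for all $\alpha$ and all $i,j$. It is contractive if each $T_j$ has norm at most $1$. For $p(z)=\sum a_\alpha z^\alpha$, $p(T)=\sum a_\alpha T_1^{\alpha_1}\cdots T_d^{\alpha_d}$. *)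

theory Defs
  imports "HOL-Analysis.Analysis"
begin

definition add_unit :: "('d \<Rightarrow> nat) \<Rightarrow> 'd \<Rightarrow> ('d \<Rightarrow> nat)" where
  "add_unit \<alpha> j = \<alpha>(j := Suc (\<alpha> j))"

definition in_l2 :: "(('d \<Rightarrow> nat) \<Rightarrow> complex^'n) \<Rightarrow> bool" where
  "in_l2 x \<longleftrightarrow> (\<lambda>\<alpha>. (norm (x \<alpha>))\<^sup>2) summable_on UNIV"

definition l2norm :: "(('d \<Rightarrow> nat) \<Rightarrow> complex^'n) \<Rightarrow> real" where
  "l2norm x = sqrt (\<Sum>\<^sub>\<infinity>\<alpha>. (norm (x \<alpha>))\<^sup>2)"

definition mshift ::
  "('d \<Rightarrow> ('d \<Rightarrow> nat) \<Rightarrow> complex^'n^'n) \<Rightarrow> 'd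
    \<Rightarrow> (('d \<Rightarrow> nat) \<Rightarrow> complex^'n) \<Rightarrow> (('d \<Rightarrow> nat) \<Rightarrow> complex^'n)" where
  "mshift A j x = (\<lambda>\<alpha>. if \<alpha> j = 0 then 0
       else A j (\<alpha>(j := \<alpha> j - 1)) *v x (\<alpha>(j := \<alpha> j - 1)))"

definition is_diag_matrix :: "complex^'n^'n \<Rightarrow> bool" where
  "is_diag_matrix M \<longleftrightarrow> (\<forall>k l. k \<noteq> l \<longrightarrow> M $ k $ l = 0)"

definition commuting_multishift_weights :: "('d \<Rightarrow> ('d \<Rightarrow> nat) \<Rightarrow> complex^'n^'n) \<Rightarrow> bool" where
  "commuting_multishift_weights A \<longleftrightarrow>
     (\<forall>j. \<exists>M. \<forall>\<alpha>. onorm (\<lambda>v. A j \<alpha> *v v) \<le> M) \<and>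
     (\<forall>\<alpha> i j. A i (add_unit \<alpha> j) ** A j \<alpha> = A j (add_unit \<alpha> i) ** A i \<alpha>)"

definition contractive_multishift :: "('d \<Rightarrow> ('d \<Rightarrow> nat) \<Rightarrow> complex^'n^'n) \<Rightarrow> bool" where
  "contractive_multishift A \<longleftrightarrow>
     (\<forall>j x. in_l2 x \<longrightarrow> in_l2 (mshift A j x) \<and> l2norm (mshift A j x) \<le> l2norm x)"

definition mshift_pow ::
  "('d::{finite,linorder} \<Rightarrow> ('d \<Rightarrow> nat) \<Rightarrow> complex^'n^'n) \<Rightarrow> ('d \<Rightarrow> nat)
    \<Rightarrow> (('d \<Rightarrow> nat) \<Rightarrow> complex^'n) \<Rightarrow> (('d \<Rightarrow> nat) \<Rightarrow> complex^'n)" where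
  "mshift_pow A \<beta> = foldr (\<lambda>j f. (mshift A j ^^ \<beta> j) \<circ> f) (sorted_list_of_set UNIV) id"

definition is_poly_coeffs :: "(('d \<Rightarrow> nat) \<Rightarrow> complex) \<Rightarrow> bool" where
  "is_poly_coeffs a \<longleftrightarrow> finite {\<beta>. a \<beta> \<noteq> 0}"

definition poly_eval :: "(('d::finite \<Rightarrow> nat) \<Rightarrow> complex) \<Rightarrow> ('d \<Rightarrow> complex) \<Rightarrow> complex" where
  "poly_eval a z = (\<Sum>\<beta>\<in>{\<beta>. a \<beta> \<noteq> 0}. a \<beta> * (\<Prod>j\<in>UNIV. z j ^ \<beta> j))"

definition poly_of_mshift ::
  "(('d::{finite,linorder} \<Rightarrow> nat) \<Rightarrow> complex) \<Rightarrow> ('d \<Rightarrow> ('d \<Rightarrow> nat) \<Rightarrow> complex^'n^'n)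
    \<Rightarrow> (('d \<Rightarrow> nat) \<Rightarrow> complex^'n) \<Rightarrow> (('d \<Rightarrow> nat) \<Rightarrow> complex^'n)" where
  "poly_of_mshift a A x = (\<lambda>\<gamma>. \<Sum>\<beta>\<in>{\<beta>. a \<beta> \<noteq> 0}. a \<beta> *s mshift_pow A \<beta> x \<gamma>)"

definition polydisc :: "('d \<Rightarrow> complex) set" where
  "polydisc = {z. \<forall>j. norm (z j) < 1}"

end

(*
  For diagonal weights the multishift splits into n scalar weighted multishifts, one per
  coordinate. For commuting nonvanishing scalar weights the product c(gamma) of the weights along a
  lattice path from 0 to gamma does not depend on the path, and conjugation by multiplication
  with c turns the weighted shift into the unweighted one: p(T) x = c (a * (x / c)), where * is
  the convolution with the coefficient array a of p. Contractivity makes |c| decreasing, so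
  |c|^2 is a positive combination of indicators of finite down-closed sets of multi-indices, and
  it suffices to bound the convolution on such a set U. There it only sees the data in U, and on
  a fine enough grid of roots of unity Parseval's identity turns it into multiplication by p,
  whose modulus on the torus is at most its supremum over the polydisc.
*)
theory Submission
  imports Defs "HOL-Library.Function_Algebras"
begin

section \<open>Shifts and convolutions of multi-indexed arrays\<close>

definition index_shift :: "('d \<Rightarrow> nat) \<Rightarrow> (('d \<Rightarrow> nat) \<Rightarrow> complex) \<Rightarrow> ('d \<Rightarrow> nat) \<Rightarrow> complex" where
  "index_shift \<beta> g \<gamma> = (if \<beta> \<le> \<gamma> then g (\<gamma> - \<beta>) else 0)"

definition poly_conv ::
  "(('d \<Rightarrow> nat) \<Rightarrow> complex) \<Rightarrow> (('d \<Rightarrow> nat) \<Rightarrow> complex) \<Rightarrow> ('d \<Rightarrow> nat) \<Rightarrow> complex" where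
  "poly_conv a y \<gamma> = (\<Sum>\<beta>\<in>{\<beta>. a \<beta> \<noteq> 0}. a \<beta> * index_shift \<beta> y \<gamma>)"

definition monomial_at :: "('d::finite \<Rightarrow> complex) \<Rightarrow> ('d \<Rightarrow> nat) \<Rightarrow> complex" where
  "monomial_at z \<beta> = (\<Prod>j\<in>UNIV. z j ^ \<beta> j)"

lemma le_add_diff_inverse_fun: "(\<beta> :: 'd \<Rightarrow> nat) \<le> \<gamma> \<Longrightarrow> \<beta> + (\<gamma> - \<beta>) = \<gamma>"
  by (auto simp: le_fun_def fun_eq_iff)

lemma le_add1_fun: "(\<beta> :: 'd \<Rightarrow> nat) \<le> \<beta> + \<alpha>"
  by (simp add: le_fun_def)

lemma index_shift_zero: "index_shift (\<lambda>_. 0) g = g"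
  by (rule ext) (simp add: index_shift_def le_fun_def fun_diff_def)

lemma index_shift_add: "index_shift \<beta> (index_shift \<beta>' g) = index_shift (\<beta> + \<beta>') g"
proof
  fix \<gamma>
  have "(\<beta> \<le> \<gamma> \<and> \<beta>' \<le> \<gamma> - \<beta>) \<longleftrightarrow> \<beta> + \<beta>' \<le> \<gamma>"
    by (auto simp: le_fun_def) (metis add_le_imp_le_diff add.commute le_diff_conv2 add_leD1)+
  moreover have "\<gamma> - \<beta> - \<beta>' = \<gamma> - (\<beta> + \<beta>')" by (simp add: fun_eq_iff)
  ultimately show "index_shift \<beta> (index_shift \<beta>' g) \<gamma> = index_shift (\<beta> + \<beta>') g \<gamma>"
    by (auto simp: index_shift_def)
qed

lemma poly_eval_eq_sum_superset:
  assumes "finite B" "{\<beta>. a \<beta> \<noteq> 0} \<subseteq> B"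
  shows "poly_eval a z = (\<Sum>\<beta>\<in>B. a \<beta> * monomial_at z \<beta>)"
  unfolding poly_eval_def monomial_at_def
  by (rule sum.mono_neutral_left) (use assms in auto)

lemma monomial_at_add: "monomial_at z (\<beta> + \<alpha>) = monomial_at z \<beta> * monomial_at z \<alpha>"
  unfolding monomial_at_def by (simp add: power_add prod.distrib)

lemma index_shift_nonzeroE:
  assumes "index_shift \<beta> y \<gamma> \<noteq> 0"
  obtains \<alpha> where "y \<alpha> \<noteq> 0" "\<gamma> = \<beta> + \<alpha>"
proof -
  from assms have "\<beta> \<le> \<gamma>" "y (\<gamma> - \<beta>) \<noteq> 0"
    by (auto simp: index_shift_def split: if_splits)
  then show thesis using that le_add_diff_inverse_fun[of \<beta> \<gamma>] by metis
qed

lemma poly_conv_nonzeroE: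
  assumes "poly_conv a y \<gamma> \<noteq> 0"
  obtains \<beta> \<alpha> where "a \<beta> \<noteq> 0" "y \<alpha> \<noteq> 0" "\<gamma> = \<beta> + \<alpha>"
proof -
  obtain \<beta> where "a \<beta> \<noteq> 0" "a \<beta> * index_shift \<beta> y \<gamma> \<noteq> 0"
    using assms sum.not_neutral_contains_not_neutral unfolding poly_conv_def by blast
  then show thesis using that by (auto elim: index_shift_nonzeroE)
qed

lemma poly_eval_index_shift:
  assumes "finite {\<alpha>. y \<alpha> \<noteq> 0}"
  shows "poly_eval (index_shift \<beta> y) z = monomial_at z \<beta> * poly_eval y z"
proof -
  let ?Sy = "{\<alpha>. y \<alpha> \<noteq> 0}"
  have "poly_eval (index_shift \<beta> y) z = (\<Sum>\<gamma>\<in>(+) \<beta> ` ?Sy. index_shift \<beta> y \<gamma> * monomial_at z \<gamma>)"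
    using assms by (intro poly_eval_eq_sum_superset) (auto elim: index_shift_nonzeroE)
  also have "\<dots> = (\<Sum>\<alpha>\<in>?Sy. y \<alpha> * monomial_at z (\<beta> + \<alpha>))"
    by (subst sum.reindex) (auto simp: inj_on_def index_shift_def le_add1_fun)
  also have "\<dots> = monomial_at z \<beta> * poly_eval y z"
    using assms
    by (simp add: poly_eval_eq_sum_superset[of ?Sy] monomial_at_add sum_distrib_left mult_ac)
  finally show ?thesis .
qed

lemma poly_eval_poly_conv:
  assumes "finite {\<beta>. a \<beta> \<noteq> 0}" "finite {\<alpha>. y \<alpha> \<noteq> 0}"
  shows "poly_eval (poly_conv a y) z = poly_eval a z * poly_eval y z"
proof -
  define C where "C = (\<lambda>(\<beta>, \<alpha>). \<beta> + \<alpha>) ` ({\<beta>. a \<beta> \<noteq> 0} \<times> {\<alpha>. y \<alpha> \<noteq> 0})"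
  have "finite C" using assms by (simp add: C_def)
  have supp_shift: "{\<gamma>. index_shift \<beta> y \<gamma> \<noteq> 0} \<subseteq> C" if "a \<beta> \<noteq> 0" for \<beta>
    using that by (force simp: C_def elim: index_shift_nonzeroE)
  have supp_conv: "{\<gamma>. poly_conv a y \<gamma> \<noteq> 0} \<subseteq> C"
    by (force simp: C_def elim: poly_conv_nonzeroE)
  have "poly_eval (poly_conv a y) z = (\<Sum>\<gamma>\<in>C. poly_conv a y \<gamma> * monomial_at z \<gamma>)"
    by (rule poly_eval_eq_sum_superset[OF \<open>finite C\<close> supp_conv])
  also have "\<dots> = (\<Sum>\<beta> | a \<beta> \<noteq> 0. a \<beta> * (\<Sum>\<gamma>\<in>C. index_shift \<beta> y \<gamma> * monomial_at z \<gamma>))"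
    by (simp add: poly_conv_def sum_distrib_left sum_distrib_right mult.assoc sum.swap[of _ C])
  also have "\<dots> = (\<Sum>\<beta> | a \<beta> \<noteq> 0. a \<beta> * poly_eval (index_shift \<beta> y) z)"
    using supp_shift by (intro sum.cong refl) (simp add: poly_eval_eq_sum_superset[OF \<open>finite C\<close>])
  also have "\<dots> = poly_eval a z * poly_eval y z"
    unfolding poly_eval_index_shift[OF assms(2)]
    by (simp add: poly_eval_def monomial_at_def sum_distrib_right mult_ac)
  finally show ?thesis .
qed

section \<open>Roots of unity and a discrete Parseval identity\<close>

definition root_unity :: "nat \<Rightarrow> complex" where
  "root_unity N = cis (2 * pi / real N)"

lemma root_unity_power: "root_unity N ^ m = cis (2 * pi * real m / real N)"
  unfolding root_unity_def Complex.DeMoivre by (simp add: mult_ac)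

lemma root_unity_power_inj:
  assumes "g < N" "g' < N" "root_unity N ^ g = root_unity N ^ g'"
  shows "g = g'"
  by (rule inj_onD[OF bij_betw_imp_inj_on[OF Complex.bij_betw_roots_unity]])
    (use assms in \<open>simp_all only: root_unity_power[symmetric] lessThan_iff\<close>)

lemma root_unity_power_self: "N > 0 \<Longrightarrow> root_unity N ^ N = 1"
  by (simp add: root_unity_power)

lemma sum_powers_root_unity_ratio:
  assumes "g < N" "g' < N"
  shows "(\<Sum>m<N. (root_unity N ^ g / root_unity N ^ g') ^ m) = (if g = g' then of_nat N else 0)"
proof (cases "g = g'")
  case False
  let ?u = "root_unity N ^ g / root_unity N ^ g'"
  have "?u \<noteq> 1" using root_unity_power_inj[OF assms] False by (auto simp: root_unity_def)
  moreover have "?u ^ N = 1"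
  proof -
    have "(root_unity N ^ i) ^ N = 1" for i
      using assms root_unity_power_self[of N]
      by (simp only: power_mult[symmetric] mult.commute[of i]) (simp add: power_mult)
    then show ?thesis by (simp add: power_divide)
  qed
  ultimately show ?thesis using False by (simp add: geometric_sum)
qed (simp add: root_unity_def)

definition index_box :: "nat \<Rightarrow> ('d \<Rightarrow> nat) set" where
  "index_box N = {\<gamma>. \<forall>j. \<gamma> j < N}"

lemma index_box_eq_PiE: "index_box N = PiE UNIV (\<lambda>_. {..<N})"
  by (auto simp: index_box_def PiE_UNIV_domain)

lemma finite_index_box: "finite (index_box N :: ('d::finite \<Rightarrow> nat) set)"
  unfolding index_box_eq_PiE by (rule finite_PiE) auto

definition torus_grid_point :: "nat \<Rightarrow> ('d \<Rightarrow> nat) \<Rightarrow> 'd \<Rightarrow> complex" where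
  "torus_grid_point N k j = root_unity N ^ k j"

lemma cnj_root_unity: "cnj (root_unity N) = inverse (root_unity N)"
  by (simp add: root_unity_def cis_cnj)

lemma norm_torus_grid_point: "norm (torus_grid_point N k j) = 1"
  by (simp add: torus_grid_point_def root_unity_def norm_power)

lemma torus_characters_orthogonal:
  fixes \<gamma> \<gamma>' :: "'d::finite \<Rightarrow> nat"
  assumes "\<gamma> \<in> index_box N" "\<gamma>' \<in> index_box N"
  shows "(\<Sum>k\<in>index_box N.
      monomial_at (torus_grid_point N k) \<gamma> * cnj (monomial_at (torus_grid_point N k) \<gamma>'))
      = (if \<gamma> = \<gamma>' then of_nat N ^ CARD('d) else 0)"
proof -
  define u where "u j = root_unity N ^ \<gamma> j / root_unity N ^ \<gamma>' j" for j
  have character: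
    "monomial_at (torus_grid_point N k) \<gamma> * cnj (monomial_at (torus_grid_point N k) \<gamma>')
      = (\<Prod>j\<in>UNIV. u j ^ k j)" for k
    by (simp add: monomial_at_def torus_grid_point_def u_def cnj_root_unity
        prod.distrib[symmetric] divide_inverse power_mult_distrib power_inverse mult.commute
        flip: power_mult)
  have "(\<Sum>k\<in>index_box N.
      monomial_at (torus_grid_point N k) \<gamma> * cnj (monomial_at (torus_grid_point N k) \<gamma>'))
      = (\<Prod>j\<in>UNIV. \<Sum>m<N. u j ^ m)"
    unfolding character index_box_eq_PiE by (rule prod_sum_PiE[symmetric]) auto
  also have "\<dots> = (\<Prod>j\<in>UNIV. if \<gamma> j = \<gamma>' j then of_nat N else 0)"
    using assms
    by (intro prod.cong refl) (simp add: u_def sum_powers_root_unity_ratio index_box_def)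
  also have "\<dots> = (if \<gamma> = \<gamma>' then of_nat N ^ CARD('d) else 0)"
    by (auto simp: fun_eq_iff intro: prod_zero)
  finally show ?thesis .
qed

lemma discrete_parseval:
  fixes q :: "('d::finite \<Rightarrow> nat) \<Rightarrow> complex"
  assumes supp: "{\<gamma>. q \<gamma> \<noteq> 0} \<subseteq> index_box N"
  shows "(\<Sum>k\<in>index_box N. (cmod (poly_eval q (torus_grid_point N k)))\<^sup>2)
      = real N ^ CARD('d) * (\<Sum>\<gamma>\<in>index_box N. (cmod (q \<gamma>))\<^sup>2)"
proof -
  let ?B = "index_box N :: ('d \<Rightarrow> nat) set"
  let ?\<chi> = "\<lambda>k \<gamma>. monomial_at (torus_grid_point N k) \<gamma>"
  have fin: "finite ?B" by (rule finite_index_box)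
  have "complex_of_real (\<Sum>k\<in>?B. (cmod (poly_eval q (torus_grid_point N k)))\<^sup>2)
      = (\<Sum>k\<in>?B. (\<Sum>\<gamma>\<in>?B. q \<gamma> * ?\<chi> k \<gamma>) * (\<Sum>\<gamma>'\<in>?B. cnj (q \<gamma>') * cnj (?\<chi> k \<gamma>')))"
    by (simp only: of_real_sum complex_norm_square poly_eval_eq_sum_superset[OF fin supp]
        cnj_sum complex_cnj_mult)
  also have "\<dots> = (\<Sum>k\<in>?B. \<Sum>\<gamma>\<in>?B. \<Sum>\<gamma>'\<in>?B. q \<gamma> * cnj (q \<gamma>') * (?\<chi> k \<gamma> * cnj (?\<chi> k \<gamma>')))"
    by (simp only: sum_product mult_ac)
  also have "\<dots> = (\<Sum>\<gamma>\<in>?B. \<Sum>k\<in>?B. \<Sum>\<gamma>'\<in>?B. q \<gamma> * cnj (q \<gamma>') * (?\<chi> k \<gamma> * cnj (?\<chi> k \<gamma>')))"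
    by (rule sum.swap)
  also have "\<dots> = (\<Sum>\<gamma>\<in>?B. \<Sum>\<gamma>'\<in>?B. \<Sum>k\<in>?B. q \<gamma> * cnj (q \<gamma>') * (?\<chi> k \<gamma> * cnj (?\<chi> k \<gamma>')))"
    by (rule sum.cong[OF refl], rule sum.swap)
  also have "\<dots> = (\<Sum>\<gamma>\<in>?B. \<Sum>\<gamma>'\<in>?B. q \<gamma> * cnj (q \<gamma>') * (if \<gamma> = \<gamma>' then of_nat N ^ CARD('d) else 0))"
    by (simp only: sum_distrib_left[symmetric] torus_characters_orthogonal cong: sum.cong)
  also have "\<dots> = (\<Sum>\<gamma>\<in>?B. q \<gamma> * cnj (q \<gamma>) * of_nat N ^ CARD('d))"
    using fin by (simp add: if_distrib[of "times _"] cong: if_cong)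
  also have "\<dots> = complex_of_real (real N ^ CARD('d) * (\<Sum>\<gamma>\<in>?B. (cmod (q \<gamma>))\<^sup>2))"
    unfolding of_real_mult of_real_sum complex_norm_square by (simp add: sum_distrib_left mult_ac)
  finally show ?thesis by (simp only: of_real_eq_iff)
qed

section \<open>Von Neumann's inequality for convolution by a polynomial\<close>

lemma bdd_above_poly_eval_polydisc:
  fixes a :: "('d::finite \<Rightarrow> nat) \<Rightarrow> complex"
  shows "bdd_above ((\<lambda>z. norm (poly_eval a z)) ` polydisc)"
proof (rule bdd_aboveI2)
  fix z :: "'d \<Rightarrow> complex" assume "z \<in> polydisc"
  then have "norm (monomial_at z \<beta>) \<le> 1" for \<beta>
    by (auto simp: monomial_at_def polydisc_def prod_norm[symmetric] norm_power less_imp_le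
        intro!: prod_le_1 power_le_one)
  then have "norm (a \<beta> * monomial_at z \<beta>) \<le> norm (a \<beta>)" for \<beta>
    by (simp add: norm_mult mult_left_le)
  then show "norm (poly_eval a z) \<le> (\<Sum>\<beta>\<in>{\<beta>. a \<beta> \<noteq> 0}. norm (a \<beta>))"
    unfolding poly_eval_def monomial_at_def[symmetric] by (intro sum_norm_le) auto
qed

lemma poly_eval_torus_le_Sup_polydisc:
  assumes "\<And>j. norm (\<omega> j) = 1"
  shows "norm (poly_eval a \<omega>) \<le> (SUP z\<in>polydisc. norm (poly_eval a z))"
proof -
  define f where "f r = norm (poly_eval a (\<lambda>j. complex_of_real r * \<omega> j))" for r :: real
  have "isCont f 1" unfolding f_def poly_eval_def by (intro continuous_intros)
  then have "(f \<longlongrightarrow> f 1) (at_left 1)"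
    unfolding isCont_def by (rule tendsto_within_subset) auto
  moreover have "eventually (\<lambda>r. f r \<le> (SUP z\<in>polydisc. norm (poly_eval a z))) (at_left 1)"
    using eventually_at_left_real[of 0 "1::real"]
  proof (rule eventually_mono)
    fix r :: real assume "r \<in> {0<..<1}"
    then have "(\<lambda>j. complex_of_real r * \<omega> j) \<in> polydisc"
      using assms by (simp add: polydisc_def norm_mult)
    then show "f r \<le> (SUP z\<in>polydisc. norm (poly_eval a z))"
      unfolding f_def by (rule cSUP_upper[OF _ bdd_above_poly_eval_polydisc])
  qed simp
  ultimately have "f 1 \<le> (SUP z\<in>polydisc. norm (poly_eval a z))"
    by (rule tendsto_upperbound) simp
  then show ?thesis by (simp add: f_def)
qed

definition down_closed :: "('d \<Rightarrow> nat) set \<Rightarrow> bool" where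
  "down_closed U \<longleftrightarrow> (\<forall>\<gamma>\<in>U. \<forall>\<alpha>\<le>\<gamma>. \<alpha> \<in> U)"

lemma down_closed_index_box: "down_closed (index_box N)"
  by (auto simp: down_closed_def index_box_def le_fun_def intro: le_less_trans)

lemma index_box_mono: "M \<le> N \<Longrightarrow> index_box M \<subseteq> index_box N"
  by (auto simp: index_box_def intro: less_le_trans)

lemma finite_subset_index_box:
  assumes "finite (X :: ('d::finite \<Rightarrow> nat) set)"
  obtains N where "X \<subseteq> index_box N"
proof
  let ?M = "Max ((\<lambda>(\<gamma>, j). \<gamma> j) ` (X \<times> UNIV))"
  show "X \<subseteq> index_box (Suc ?M)"
    using assms by (force simp: index_box_def less_Suc_eq_le intro: Max_ge)
qed

context
  fixes a :: "('d::finite \<Rightarrow> nat) \<Rightarrow> complex" and S :: real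
  assumes finite_coeffs: "finite {\<beta>. a \<beta> \<noteq> 0}"
    and torus_bound: "\<And>\<omega>. (\<And>j. norm (\<omega> j) = 1) \<Longrightarrow> norm (poly_eval a \<omega>) \<le> S"
begin

text \<open>In a box of side N = 2M + 1 containing the supports of a, y and of their convolution
  there is no wrap-around, so on the grid of N-th roots of unity the convolution becomes a pointwise
  product and Parseval applies to both sides.\<close>
lemma sum_sq_poly_conv_le:
  assumes "finite U" "{\<alpha>. y \<alpha> \<noteq> 0} \<subseteq> U"
  shows "(\<Sum>\<gamma>\<in>U. (cmod (poly_conv a y \<gamma>))\<^sup>2) \<le> S\<^sup>2 * (\<Sum>\<gamma>\<in>U. (cmod (y \<gamma>))\<^sup>2)"
proof -
  obtain M where M: "{\<beta>. a \<beta> \<noteq> 0} \<union> U \<subseteq> index_box M"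
    using finite_subset_index_box finite_coeffs assms(1) by (metis finite_Un)
  define N where "N = Suc (2 * M)"
  let ?B = "index_box N :: ('d \<Rightarrow> nat) set"
  let ?\<omega> = "torus_grid_point N"
  have "M \<le> N" by (simp add: N_def)
  then have UB: "U \<subseteq> ?B" using M index_box_mono by blast
  have conv_B: "{\<gamma>. poly_conv a y \<gamma> \<noteq> 0} \<subseteq> ?B"
  proof
    fix \<gamma> assume "\<gamma> \<in> {\<gamma>. poly_conv a y \<gamma> \<noteq> 0}"
    then obtain \<beta> \<alpha> where "a \<beta> \<noteq> 0" "y \<alpha> \<noteq> 0" "\<gamma> = \<beta> + \<alpha>"
      by (auto elim: poly_conv_nonzeroE)
    with M assms(2) have "\<beta> j < M" "\<alpha> j < M" "\<gamma> j = \<beta> j + \<alpha> j" for j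
      by (auto simp: index_box_def)
    then have "\<gamma> j < N" for j
      unfolding N_def by (metis add_less_mono less_Suc_eq mult_2)
    then show "\<gamma> \<in> ?B" by (simp add: index_box_def)
  qed
  have "real N ^ CARD('d) * (\<Sum>\<gamma>\<in>U. (cmod (poly_conv a y \<gamma>))\<^sup>2)
      \<le> real N ^ CARD('d) * (\<Sum>\<gamma>\<in>?B. (cmod (poly_conv a y \<gamma>))\<^sup>2)"
    by (intro mult_left_mono sum_mono2[OF finite_index_box UB]) auto
  also have "\<dots> = (\<Sum>k\<in>?B. (cmod (poly_eval a (?\<omega> k)))\<^sup>2 * (cmod (poly_eval y (?\<omega> k)))\<^sup>2)"
    using finite_subset[OF assms(2,1)]
    by (simp add: discrete_parseval[OF conv_B, symmetric] poly_eval_poly_conv[OF finite_coeffs]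
        norm_mult power_mult_distrib)
  also have "\<dots> \<le> (\<Sum>k\<in>?B. S\<^sup>2 * (cmod (poly_eval y (?\<omega> k)))\<^sup>2)"
    by (intro sum_mono mult_right_mono power_mono torus_bound norm_torus_grid_point) auto
  also have "\<dots> = real N ^ CARD('d) * (S\<^sup>2 * (\<Sum>\<gamma>\<in>?B. (cmod (y \<gamma>))\<^sup>2))"
    using assms(2) UB by (simp add: sum_distrib_left[symmetric] discrete_parseval)
  also have "(\<Sum>\<gamma>\<in>?B. (cmod (y \<gamma>))\<^sup>2) = (\<Sum>\<gamma>\<in>U. (cmod (y \<gamma>))\<^sup>2)"
    using assms(2) by (intro sum.mono_neutral_right[OF finite_index_box UB]) auto
  finally show ?thesis by (simp add: N_def)
qed

lemma sum_sq_poly_conv_le_down_closed: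
  assumes "finite U" "down_closed U"
  shows "(\<Sum>\<gamma>\<in>U. (cmod (poly_conv a y \<gamma>))\<^sup>2) \<le> S\<^sup>2 * (\<Sum>\<gamma>\<in>U. (cmod (y \<gamma>))\<^sup>2)"
proof -
  define z where "z \<alpha> = (if \<alpha> \<in> U then y \<alpha> else 0)" for \<alpha>
  have "poly_conv a y \<gamma> = poly_conv a z \<gamma>" if "\<gamma> \<in> U" for \<gamma>
  proof -
    have "index_shift \<beta> y \<gamma> = index_shift \<beta> z \<gamma>" for \<beta>
      using that assms(2) by (auto simp: index_shift_def z_def down_closed_def le_fun_def)
    then show ?thesis by (simp add: poly_conv_def)
  qed
  moreover have "(\<Sum>\<gamma>\<in>U. (cmod (poly_conv a z \<gamma>))\<^sup>2) \<le> S\<^sup>2 * (\<Sum>\<gamma>\<in>U. (cmod (z \<gamma>))\<^sup>2)"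
    by (rule sum_sq_poly_conv_le[OF assms(1)]) (auto simp: z_def)
  ultimately show ?thesis by (simp add: z_def)
qed

text \<open>Layer-cake argument: subtracting the minimum m of the weight leaves the unweighted
  inequality on U, scaled by m, plus a weight supported on a smaller down-closed set.\<close>
lemma weighted_sum_sq_poly_conv_le:
  assumes "finite U" "down_closed U"
    and "\<And>\<gamma>. \<gamma> \<in> U \<Longrightarrow> 0 \<le> \<nu> \<gamma>"
    and "\<And>\<alpha> \<gamma>. \<gamma> \<in> U \<Longrightarrow> \<alpha> \<le> \<gamma> \<Longrightarrow> \<nu> \<gamma> \<le> \<nu> \<alpha>"
  shows "(\<Sum>\<gamma>\<in>U. \<nu> \<gamma> * (cmod (poly_conv a y \<gamma>))\<^sup>2) \<le> S\<^sup>2 * (\<Sum>\<gamma>\<in>U. \<nu> \<gamma> * (cmod (y \<gamma>))\<^sup>2)"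
  using assms
proof (induction U arbitrary: \<nu> rule: finite_psubset_induct)
  case (psubset U)
  show ?case
  proof (cases "U = {}")
    case False
    define m where "m = Min (\<nu> ` U)"
    have "m \<in> \<nu> ` U"
      unfolding m_def using psubset.hyps False by (intro Min_in) auto
    then obtain \<gamma>\<^sub>0 where "\<gamma>\<^sub>0 \<in> U" "\<nu> \<gamma>\<^sub>0 = m" by blast
    have m_le: "m \<le> \<nu> \<gamma>" if "\<gamma> \<in> U" for \<gamma>
      using psubset.hyps that by (simp add: m_def)
    have "0 \<le> m" using psubset.prems(2) \<open>\<gamma>\<^sub>0 \<in> U\<close> \<open>\<nu> \<gamma>\<^sub>0 = m\<close> by blast
    define U' where "U' = {\<gamma>\<in>U. m < \<nu> \<gamma>}"
    have "U' \<subset> U" using \<open>\<gamma>\<^sub>0 \<in> U\<close> \<open>\<nu> \<gamma>\<^sub>0 = m\<close> by (auto simp: U'_def)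
    moreover have "down_closed U'"
      using psubset.prems(1,3) by (fastforce simp: down_closed_def U'_def)
    ultimately have IH: "(\<Sum>\<gamma>\<in>U'. (\<nu> \<gamma> - m) * (cmod (poly_conv a y \<gamma>))\<^sup>2)
        \<le> S\<^sup>2 * (\<Sum>\<gamma>\<in>U'. (\<nu> \<gamma> - m) * (cmod (y \<gamma>))\<^sup>2)"
      using psubset.prems(3) by (intro psubset.IH) (auto simp: U'_def)
    have split: "(\<Sum>\<gamma>\<in>U. \<nu> \<gamma> * f \<gamma>) = m * (\<Sum>\<gamma>\<in>U. f \<gamma>) + (\<Sum>\<gamma>\<in>U'. (\<nu> \<gamma> - m) * f \<gamma>)"
      for f :: "_ \<Rightarrow> real"
    proof -
      have "(\<Sum>\<gamma>\<in>U. (\<nu> \<gamma> - m) * f \<gamma>) = (\<Sum>\<gamma>\<in>U'. (\<nu> \<gamma> - m) * f \<gamma>)"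
        using psubset.hyps m_le by (intro sum.mono_neutral_right) (force simp: U'_def)+
      then show ?thesis
        by (simp add: algebra_simps sum.distrib sum_distrib_left sum_subtractf)
    qed
    have "(\<Sum>\<gamma>\<in>U. (cmod (poly_conv a y \<gamma>))\<^sup>2) \<le> S\<^sup>2 * (\<Sum>\<gamma>\<in>U. (cmod (y \<gamma>))\<^sup>2)"
      using psubset.hyps psubset.prems(1) by (rule sum_sq_poly_conv_le_down_closed)
    with IH \<open>0 \<le> m\<close> show ?thesis
      unfolding split by (simp add: algebra_simps add_mono mult_left_mono)
  qed simp
qed

end

section \<open>Path weights of commuting scalar weights\<close>

definition commuting_weights :: "('d \<Rightarrow> ('d \<Rightarrow> nat) \<Rightarrow> complex) \<Rightarrow> bool" where
  "commuting_weights w \<longleftrightarrow> (\<forall>\<alpha> i j. w i (add_unit \<alpha> j) * w j \<alpha> = w j (add_unit \<alpha> i) * w i \<alpha>)"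

lemma sum_fun_upd_decr_less:
  fixes \<gamma> :: "'d::finite \<Rightarrow> nat"
  assumes "\<gamma> j \<noteq> 0"
  shows "sum (\<gamma>(j := \<gamma> j - 1)) UNIV < sum \<gamma> UNIV"
  by (rule sum_strict_mono_ex1) (use assms in auto)

text \<open>The product of the weights along a monotone lattice path from 0 to \<gamma>, stepping down in an
  arbitrarily chosen nonzero coordinate; for commuting weights the choice does not matter.\<close>
function path_weight :: "('d::finite \<Rightarrow> ('d \<Rightarrow> nat) \<Rightarrow> complex) \<Rightarrow> ('d \<Rightarrow> nat) \<Rightarrow> complex" where
  "path_weight w \<gamma> =
     (if \<exists>j. \<gamma> j \<noteq> 0 then
        let j = SOME j. \<gamma> j \<noteq> 0; \<gamma>' = \<gamma>(j := \<gamma> j - 1) in w j \<gamma>' * path_weight w \<gamma>'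
      else 1)"
  by pat_completeness auto
termination
proof (relation "Wellfounded.measure (\<lambda>(w, \<gamma>). sum \<gamma> UNIV)")
  fix w :: "'d::finite \<Rightarrow> ('d \<Rightarrow> nat) \<Rightarrow> complex" and \<gamma> :: "'d \<Rightarrow> nat" and j \<gamma>'
  assume ex: "\<exists>j. \<gamma> j \<noteq> 0" and j: "j = (SOME j. \<gamma> j \<noteq> 0)" and \<gamma>': "\<gamma>' = \<gamma>(j := \<gamma> j - 1)"
  have "\<gamma> j \<noteq> 0" unfolding j by (rule someI_ex[OF ex])
  then have "sum \<gamma>' UNIV < sum \<gamma> UNIV" unfolding \<gamma>' by (rule sum_fun_upd_decr_less)
  then show "((w, \<gamma>'), (w, \<gamma>)) \<in> Wellfounded.measure (\<lambda>(w, \<gamma>). sum \<gamma> UNIV)" by simp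
qed simp

declare path_weight.simps [simp del]

lemma path_weight_zero: "path_weight w (\<lambda>_. 0) = 1"
  by (simp add: path_weight.simps)

context
  fixes w :: "'d::finite \<Rightarrow> ('d \<Rightarrow> nat) \<Rightarrow> complex"
  assumes commuting: "commuting_weights w"
begin

lemma path_weight_step:
  "\<gamma> j \<noteq> 0 \<Longrightarrow> path_weight w \<gamma> = w j (\<gamma>(j := \<gamma> j - 1)) * path_weight w (\<gamma>(j := \<gamma> j - 1))"
proof (induction \<gamma> arbitrary: j rule: measure_induct_rule[where f = "\<lambda>\<gamma>. sum \<gamma> UNIV"])
  case (less \<gamma> j)
  define s where "s = (SOME j. \<gamma> j \<noteq> 0)"
  have "\<gamma> s \<noteq> 0" unfolding s_def by (rule someI_ex) (use less.prems in blast)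
  have unfold_s: "path_weight w \<gamma> = w s (\<gamma>(s := \<gamma> s - 1)) * path_weight w (\<gamma>(s := \<gamma> s - 1))"
    using less.prems by (subst path_weight.simps) (auto simp: s_def Let_def)
  show ?case
  proof (cases "s = j")
    case False
    define \<alpha> where "\<alpha> = \<gamma>(s := \<gamma> s - 1, j := \<gamma> j - 1)"
    have s_first: "path_weight w (\<gamma>(s := \<gamma> s - 1)) = w j \<alpha> * path_weight w \<alpha>"
    proof -
      have "(\<gamma>(s := \<gamma> s - 1)) j \<noteq> 0" "(\<gamma>(s := \<gamma> s - 1))(j := (\<gamma>(s := \<gamma> s - 1)) j - 1) = \<alpha>"
        using less.prems False by (auto simp: \<alpha>_def fun_eq_iff)
      from less.IH[OF sum_fun_upd_decr_less[of \<gamma> s, OF \<open>\<gamma> s \<noteq> 0\<close>] this(1)] this(2)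
      show ?thesis by (simp only:)
    qed
    have j_first: "path_weight w (\<gamma>(j := \<gamma> j - 1)) = w s \<alpha> * path_weight w \<alpha>"
    proof -
      have "(\<gamma>(j := \<gamma> j - 1)) s \<noteq> 0" "(\<gamma>(j := \<gamma> j - 1))(s := (\<gamma>(j := \<gamma> j - 1)) s - 1) = \<alpha>"
        using \<open>\<gamma> s \<noteq> 0\<close> False by (auto simp: \<alpha>_def fun_eq_iff)
      from less.IH[OF sum_fun_upd_decr_less[of \<gamma> j, OF less.prems] this(1)] this(2)
      show ?thesis by (simp only:)
    qed
    have "w s (add_unit \<alpha> j) * w j \<alpha> = w j (add_unit \<alpha> s) * w s \<alpha>"
      using commuting unfolding commuting_weights_def by blast
    moreover have "add_unit \<alpha> j = \<gamma>(s := \<gamma> s - 1)" "add_unit \<alpha> s = \<gamma>(j := \<gamma> j - 1)"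
      using False less.prems \<open>\<gamma> s \<noteq> 0\<close> by (auto simp: add_unit_def \<alpha>_def fun_eq_iff)
    ultimately have swap: "w s (\<gamma>(s := \<gamma> s - 1)) * w j \<alpha> = w j (\<gamma>(j := \<gamma> j - 1)) * w s \<alpha>"
      by simp
    have "path_weight w \<gamma> = (w s (\<gamma>(s := \<gamma> s - 1)) * w j \<alpha>) * path_weight w \<alpha>"
      by (simp only: unfold_s s_first mult.assoc)
    also have "\<dots> = w j (\<gamma>(j := \<gamma> j - 1)) * path_weight w (\<gamma>(j := \<gamma> j - 1))"
      by (simp only: swap j_first mult.assoc)
    finally show ?thesis .
  qed (use unfold_s in \<open>simp only:\<close>)
qed

lemma path_weight_add_unit: "path_weight w (add_unit \<alpha> j) = w j \<alpha> * path_weight w \<alpha>"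
  using path_weight_step[of "add_unit \<alpha> j" j] by (simp add: add_unit_def)

lemma path_weight_nonzero:
  assumes "\<And>j \<alpha>. w j \<alpha> \<noteq> 0"
  shows "path_weight w \<gamma> \<noteq> 0"
proof (induction \<gamma> rule: measure_induct_rule[where f = "\<lambda>\<gamma>. sum \<gamma> UNIV"])
  case (less \<gamma>)
  show ?case
  proof (cases "\<exists>j. \<gamma> j \<noteq> 0")
    case True
    then obtain j where "\<gamma> j \<noteq> 0" by blast
    have "path_weight w (\<gamma>(j := \<gamma> j - 1)) \<noteq> 0"
      by (rule less.IH) (rule sum_fun_upd_decr_less[of \<gamma> j, OF \<open>\<gamma> j \<noteq> 0\<close>])
    with assms show ?thesis by (simp add: path_weight_step[of \<gamma> j, OF \<open>\<gamma> j \<noteq> 0\<close>])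
  next
    case False
    then have "\<gamma> = (\<lambda>_. 0)" by auto
    then show ?thesis by (simp add: path_weight_zero)
  qed
qed

lemma norm_path_weight_antimono:
  assumes "\<And>j \<alpha>. norm (w j \<alpha>) \<le> 1"
  shows "\<alpha> \<le> \<gamma> \<Longrightarrow> norm (path_weight w \<gamma>) \<le> norm (path_weight w \<alpha>)"
proof (induction \<gamma> rule: measure_induct_rule[where f = "\<lambda>\<gamma>. sum \<gamma> UNIV"])
  case (less \<gamma>)
  show ?case
  proof (cases "\<gamma> = \<alpha>")
    case False
    then obtain j where "\<alpha> j < \<gamma> j" using less.prems
      by (metis le_funD le_funI nat_less_le order_antisym)
    then have "\<gamma> j \<noteq> 0" by simp
    define \<gamma>' where "\<gamma>' = \<gamma>(j := \<gamma> j - 1)"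
    have "\<alpha> \<le> \<gamma>'" using less.prems \<open>\<alpha> j < \<gamma> j\<close> by (auto simp: \<gamma>'_def le_fun_def)
    have "norm (path_weight w \<gamma>) = norm (w j \<gamma>') * norm (path_weight w \<gamma>')"
      by (simp add: path_weight_step[of \<gamma> j, OF \<open>\<gamma> j \<noteq> 0\<close>] \<gamma>'_def norm_mult)
    also have "\<dots> \<le> norm (path_weight w \<gamma>')"
      using assms by (simp add: mult_left_le_one_le)
    also have "\<dots> \<le> norm (path_weight w \<alpha>)"
      using less.IH[OF sum_fun_upd_decr_less[of \<gamma> j, OF \<open>\<gamma> j \<noteq> 0\<close>]] \<open>\<alpha> \<le> \<gamma>'\<close>
      unfolding \<gamma>'_def .
    finally show ?thesis .
  qed simp
qed

end

section \<open>Operator-valued multishifts with diagonal weights\<close>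

definition diag_weight :: "('d \<Rightarrow> ('d \<Rightarrow> nat) \<Rightarrow> complex^'n^'n) \<Rightarrow> 'n \<Rightarrow> 'd \<Rightarrow> ('d \<Rightarrow> nat) \<Rightarrow> complex" where
  "diag_weight A k j \<alpha> = A j \<alpha> $ k $ k"

lemma diag_matrix_vector_mult_nth:
  fixes M :: "complex^'n^'n"
  assumes "is_diag_matrix M"
  shows "(M *v v) $ k = M $ k $ k * v $ k"
proof -
  have "(M *v v) $ k = (\<Sum>l\<in>UNIV. M $ k $ l * v $ l)" by (simp add: matrix_vector_mult_def)
  also have "\<dots> = (\<Sum>l\<in>UNIV. if l = k then M $ k $ k * v $ k else 0)"
    by (rule sum.cong) (use assms in \<open>auto simp: is_diag_matrix_def\<close>)
  finally show ?thesis by simp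
qed

lemma diag_matrix_mult_nth:
  fixes M M' :: "complex^'n^'n"
  assumes "is_diag_matrix M"
  shows "(M ** M') $ k $ k = M $ k $ k * M' $ k $ k"
proof -
  have "(M ** M') $ k $ k = (\<Sum>l\<in>UNIV. M $ k $ l * M' $ l $ k)" by (simp add: matrix_matrix_mult_def)
  also have "\<dots> = (\<Sum>l\<in>UNIV. if l = k then M $ k $ k * M' $ k $ k else 0)"
    by (rule sum.cong) (use assms in \<open>auto simp: is_diag_matrix_def\<close>)
  finally show ?thesis by simp
qed

lemma diag_invertible_nth_nonzero:
  fixes M :: "complex^'n^'n"
  assumes "is_diag_matrix M" "invertible M"
  shows "M $ k $ k \<noteq> 0"
proof
  assume "M $ k $ k = 0"
  obtain M' where "M ** M' = mat 1" using assms(2) unfolding invertible_def by blast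
  then have "(M ** M') $ k $ k = 1" by (simp add: mat_def)
  with \<open>M $ k $ k = 0\<close> show False by (simp add: diag_matrix_mult_nth[OF assms(1)])
qed

lemma in_l2_single: "in_l2 (\<lambda>\<beta>. if \<beta> = \<alpha> then v else 0)"
  unfolding in_l2_def by (rule finite_nonzero_values_imp_summable_on) (simp add: Collect_mono)

lemma l2norm_single: "l2norm (\<lambda>\<beta>. if \<beta> = \<alpha> then v else 0) = norm v"
proof -
  have "(\<Sum>\<^sub>\<infinity>\<beta>. (norm (if \<beta> = \<alpha> then v else 0))\<^sup>2) = (\<Sum>\<^sub>\<infinity>\<beta>\<in>{\<alpha>}. (norm v)\<^sup>2)"
    by (rule infsum_cong_neutral) auto
  then show ?thesis by (simp add: l2norm_def)
qed

lemma norm_le_l2norm: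
  assumes "in_l2 x"
  shows "norm (x \<gamma>) \<le> l2norm x"
proof -
  have "(\<Sum>\<beta>\<in>{\<gamma>}. (norm (x \<beta>))\<^sup>2) \<le> (\<Sum>\<^sub>\<infinity>\<beta>. (norm (x \<beta>))\<^sup>2)"
    using assms unfolding in_l2_def by (intro finite_sum_le_infsum) auto
  then show ?thesis unfolding l2norm_def by (simp add: real_le_rsqrt)
qed

lemma l2norm_le_if_down_closed_sums_le:
  fixes x :: "('d::finite \<Rightarrow> nat) \<Rightarrow> complex^'n" and y :: "('d \<Rightarrow> nat) \<Rightarrow> complex^'m"
  assumes "in_l2 x" "0 \<le> S"
    and "\<And>U. finite U \<Longrightarrow> down_closed U \<Longrightarrow>
      (\<Sum>\<gamma>\<in>U. (norm (y \<gamma>))\<^sup>2) \<le> S\<^sup>2 * (\<Sum>\<gamma>\<in>U. (norm (x \<gamma>))\<^sup>2)"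
  shows "l2norm y \<le> S * l2norm x"
proof -
  let ?I = "\<Sum>\<^sub>\<infinity>\<gamma>. (norm (x \<gamma>))\<^sup>2"
  have finite_sums: "(\<Sum>\<gamma>\<in>G. (norm (y \<gamma>))\<^sup>2) \<le> S\<^sup>2 * ?I" if G: "finite G" for G
  proof -
    obtain N where "G \<subseteq> index_box N" using finite_subset_index_box[OF G] by blast
    then have "(\<Sum>\<gamma>\<in>G. (norm (y \<gamma>))\<^sup>2) \<le> (\<Sum>\<gamma>\<in>index_box N. (norm (y \<gamma>))\<^sup>2)"
      by (intro sum_mono2 finite_index_box) auto
    also have "\<dots> \<le> S\<^sup>2 * (\<Sum>\<gamma>\<in>index_box N. (norm (x \<gamma>))\<^sup>2)"
      by (intro assms(3) finite_index_box down_closed_index_box)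
    also have "\<dots> \<le> S\<^sup>2 * ?I"
      using assms(1) unfolding in_l2_def
      by (intro mult_left_mono finite_sum_le_infsum finite_index_box) auto
    finally show ?thesis .
  qed
  have "(\<Sum>\<^sub>\<infinity>\<gamma>. (norm (y \<gamma>))\<^sup>2) \<le> S\<^sup>2 * ?I"
  proof (cases "(\<lambda>\<gamma>. (norm (y \<gamma>))\<^sup>2) summable_on UNIV")
    case True
    then show ?thesis by (rule infsum_le_finite_sums) (use finite_sums in auto)
  next
    case False
    then show ?thesis by (simp add: infsum_not_exists infsum_nonneg)
  qed
  then have "l2norm y \<le> sqrt (S\<^sup>2 * ?I)" by (simp add: l2norm_def)
  also have "\<dots> = S * l2norm x" using assms(2) by (simp add: l2norm_def real_sqrt_mult)
  finally show ?thesis .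
qed

lemma power2_norm_vec: "(norm (v :: 'a::real_normed_vector^'n))\<^sup>2 = (\<Sum>k\<in>UNIV. (norm (v $ k))\<^sup>2)"
  by (simp add: norm_vec_def L2_set_def sum_nonneg)

lemma norm_multishift_weight_le:
  assumes "contractive_multishift A"
  shows "norm (A j \<alpha> *v v) \<le> norm v"
proof -
  define x where "x \<beta> = (if \<beta> = \<alpha> then v else 0)" for \<beta>
  have "in_l2 x" unfolding x_def by (rule in_l2_single)
  then have "in_l2 (mshift A j x)" "l2norm (mshift A j x) \<le> l2norm x"
    using assms unfolding contractive_multishift_def by blast+
  have "norm (A j \<alpha> *v v) = norm (mshift A j x (add_unit \<alpha> j))"
    by (simp add: mshift_def x_def add_unit_def)
  also have "\<dots> \<le> l2norm (mshift A j x)" by (rule norm_le_l2norm) fact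
  also have "\<dots> \<le> l2norm x" by fact
  also have "\<dots> = norm v" unfolding x_def by (rule l2norm_single)
  finally show ?thesis .
qed

lemma norm_diag_weight_le_1:
  assumes "contractive_multishift A" "is_diag_matrix (A j \<alpha>)"
  shows "norm (diag_weight A k j \<alpha>) \<le> 1"
proof -
  have "norm (diag_weight A k j \<alpha>) = norm ((A j \<alpha> *v axis k 1) $ k)"
    by (simp add: diag_weight_def diag_matrix_vector_mult_nth[OF assms(2)])
  also have "\<dots> \<le> norm (A j \<alpha> *v axis k 1)" by (rule Finite_Cartesian_Product.norm_nth_le)
  also have "\<dots> \<le> norm (axis k (1::complex))" by (rule norm_multishift_weight_le[OF assms(1)])
  also have "\<dots> = 1" by (simp add: inner_axis' norm_eq_1)
  finally show ?thesis .
qed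

lemma commuting_weights_diag_weight:
  assumes "commuting_multishift_weights A" "\<And>j \<alpha>. is_diag_matrix (A j \<alpha>)"
  shows "commuting_weights (diag_weight A k)"
  unfolding commuting_weights_def diag_weight_def
proof (intro allI)
  fix \<alpha> i j
  have "A i (add_unit \<alpha> j) ** A j \<alpha> = A j (add_unit \<alpha> i) ** A i \<alpha>"
    using assms(1) unfolding commuting_multishift_weights_def by blast
  then have "(A i (add_unit \<alpha> j) ** A j \<alpha>) $ k $ k = (A j (add_unit \<alpha> i) ** A i \<alpha>) $ k $ k"
    by simp
  then show "A i (add_unit \<alpha> j) $ k $ k * A j \<alpha> $ k $ k
      = A j (add_unit \<alpha> i) $ k $ k * A i \<alpha> $ k $ k"
    by (simp add: diag_matrix_mult_nth[OF assms(2)])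
qed

definition scaled_coord ::
  "(('d \<Rightarrow> nat) \<Rightarrow> complex) \<Rightarrow> 'n \<Rightarrow> (('d \<Rightarrow> nat) \<Rightarrow> complex^'n) \<Rightarrow> ('d \<Rightarrow> nat) \<Rightarrow> complex" where
  "scaled_coord c k x \<alpha> = x \<alpha> $ k / c \<alpha>"

context
  fixes A :: "'d::{finite,linorder} \<Rightarrow> ('d \<Rightarrow> nat) \<Rightarrow> complex^'n^'n"
    and k :: 'n and c :: "('d \<Rightarrow> nat) \<Rightarrow> complex"
  assumes diag: "\<And>j \<alpha>. is_diag_matrix (A j \<alpha>)"
    and c_step: "\<And>\<alpha> j. c (add_unit \<alpha> j) = diag_weight A k j \<alpha> * c \<alpha>"
    and c_nonzero: "\<And>\<alpha>. c \<alpha> \<noteq> 0"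
begin

lemma scaled_coord_mshift:
  "scaled_coord c k (mshift A j x) = index_shift (\<lambda>i. if i = j then 1 else 0) (scaled_coord c k x)"
proof
  fix \<gamma>
  show "scaled_coord c k (mshift A j x) \<gamma>
      = index_shift (\<lambda>i. if i = j then 1 else 0) (scaled_coord c k x) \<gamma>"
  proof (cases "\<gamma> j = 0")
    case False
    define \<gamma>' where "\<gamma>' = \<gamma>(j := \<gamma> j - 1)"
    have "add_unit \<gamma>' j = \<gamma>" using False by (auto simp: add_unit_def \<gamma>'_def)
    then have "c \<gamma> = diag_weight A k j \<gamma>' * c \<gamma>'" using c_step by metis
    with c_nonzero[of \<gamma>] have "A j \<gamma>' $ k $ k \<noteq> 0" by (auto simp: diag_weight_def)
    have "(\<lambda>i. if i = j then 1 else 0) \<le> \<gamma>" "\<gamma> - (\<lambda>i. if i = j then 1 else 0) = \<gamma>'"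
      using False by (auto simp: le_fun_def fun_eq_iff \<gamma>'_def)
    moreover have "mshift A j x \<gamma> $ k = A j \<gamma>' $ k $ k * x \<gamma>' $ k"
      using False by (simp add: mshift_def \<gamma>'_def diag_matrix_vector_mult_nth[OF diag])
    ultimately show ?thesis
      using \<open>c \<gamma> = _\<close> \<open>A j \<gamma>' $ k $ k \<noteq> 0\<close>
      by (simp add: scaled_coord_def index_shift_def diag_weight_def)
  qed (auto simp: scaled_coord_def mshift_def index_shift_def le_fun_def)
qed

lemma scaled_coord_mshift_funpow:
  "scaled_coord c k ((mshift A j ^^ n) x)
    = index_shift (\<lambda>i. if i = j then n else 0) (scaled_coord c k x)"
proof (induction n)
  case (Suc n)
  have "(\<lambda>i. if i = j then 1 else 0) + (\<lambda>i. if i = j then n else 0)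
      = ((\<lambda>i. if i = j then Suc n else 0) :: 'd \<Rightarrow> nat)"
    by (simp add: fun_eq_iff)
  with Suc show ?case by (simp add: scaled_coord_mshift index_shift_add)
qed (simp add: index_shift_zero)

lemma scaled_coord_foldr:
  assumes "distinct L"
  shows "scaled_coord c k (foldr (\<lambda>j f. (mshift A j ^^ \<beta> j) \<circ> f) L id x)
       = index_shift (\<lambda>i. if i \<in> set L then \<beta> i else 0) (scaled_coord c k x)"
  using assms
proof (induction L)
  case (Cons j L)
  have "(\<lambda>i. if i = j then \<beta> j else 0) + (\<lambda>i. if i \<in> set L then \<beta> i else 0)
      = (\<lambda>i. if i \<in> set (j # L) then \<beta> i else 0)"
    using Cons.prems by (auto simp: fun_eq_iff)
  with Cons show ?case by (simp add: scaled_coord_mshift_funpow index_shift_add)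
qed (simp add: index_shift_zero)

lemma scaled_coord_mshift_pow:
  "scaled_coord c k (mshift_pow A \<beta> x) = index_shift \<beta> (scaled_coord c k x)"
  using scaled_coord_foldr[of "sorted_list_of_set UNIV" \<beta> x] by (simp add: mshift_pow_def)

lemma poly_of_mshift_nth: "poly_of_mshift a A x \<gamma> $ k = c \<gamma> * poly_conv a (scaled_coord c k x) \<gamma>"
proof -
  have "mshift_pow A \<beta> x \<gamma> $ k = c \<gamma> * index_shift \<beta> (scaled_coord c k x) \<gamma>" for \<beta>
    using fun_cong[OF scaled_coord_mshift_pow[of \<beta> x], of \<gamma>] c_nonzero[of \<gamma>]
    by (simp add: scaled_coord_def field_simps)
  then show ?thesis by (simp add: poly_of_mshift_def poly_conv_def sum_distrib_left mult_ac)
qed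

end

context
  fixes A :: "'d::{finite,linorder} \<Rightarrow> ('d \<Rightarrow> nat) \<Rightarrow> complex^'n^'n"
    and a :: "('d \<Rightarrow> nat) \<Rightarrow> complex" and S :: real
  assumes commuting: "commuting_multishift_weights A"
    and contractive: "contractive_multishift A"
    and diag: "\<And>j \<alpha>. is_diag_matrix (A j \<alpha>)"
    and invertible: "\<And>j \<alpha>. invertible (A j \<alpha>)"
    and finite_coeffs: "finite {\<beta>. a \<beta> \<noteq> 0}"
    and torus_bound: "\<And>\<omega>. (\<And>j. norm (\<omega> j) = 1) \<Longrightarrow> norm (poly_eval a \<omega>) \<le> S"
begin

lemma diag_multishift_coord_sum_sq_le:
  assumes "finite U" "down_closed U"
  shows "(\<Sum>\<gamma>\<in>U. (cmod (poly_of_mshift a A x \<gamma> $ k))\<^sup>2) \<le> S\<^sup>2 * (\<Sum>\<gamma>\<in>U. (cmod (x \<gamma> $ k))\<^sup>2)"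
proof -
  define c where "c = path_weight (diag_weight A k)"
  have weights: "commuting_weights (diag_weight A k)"
    by (rule commuting_weights_diag_weight[OF commuting diag])
  have c_step: "c (add_unit \<alpha> j) = diag_weight A k j \<alpha> * c \<alpha>" for \<alpha> j
    unfolding c_def by (rule path_weight_add_unit[OF weights])
  have c_nonzero: "c \<alpha> \<noteq> 0" for \<alpha>
    unfolding c_def using diag_invertible_nth_nonzero[OF diag invertible]
    by (intro path_weight_nonzero[OF weights]) (simp add: diag_weight_def)
  have c_antimono: "(cmod (c \<gamma>))\<^sup>2 \<le> (cmod (c \<alpha>))\<^sup>2" if "\<alpha> \<le> \<gamma>" for \<alpha> \<gamma>
    unfolding c_def using norm_diag_weight_le_1[OF contractive diag]
    by (intro power_mono norm_path_weight_antimono[OF weights _ that]) auto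
  let ?y = "scaled_coord c k x"
  have "(\<Sum>\<gamma>\<in>U. (cmod (c \<gamma>))\<^sup>2 * (cmod (poly_conv a ?y \<gamma>))\<^sup>2)
      \<le> S\<^sup>2 * (\<Sum>\<gamma>\<in>U. (cmod (c \<gamma>))\<^sup>2 * (cmod (?y \<gamma>))\<^sup>2)"
  proof (rule weighted_sum_sq_poly_conv_le[OF finite_coeffs torus_bound assms])
    show "(cmod (c \<gamma>))\<^sup>2 \<le> (cmod (c \<alpha>))\<^sup>2" if "\<gamma> \<in> U" "\<alpha> \<le> \<gamma>" for \<alpha> \<gamma>
      using that(2) by (rule c_antimono)
  qed simp_all
  moreover have "x \<gamma> $ k = c \<gamma> * ?y \<gamma>" for \<gamma>
    using c_nonzero[of \<gamma>] by (simp add: scaled_coord_def)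
  ultimately show ?thesis
    by (simp add: poly_of_mshift_nth[OF diag c_step c_nonzero] norm_mult power_mult_distrib)
qed

lemma diag_multishift_sum_sq_le:
  assumes "finite U" "down_closed U"
  shows "(\<Sum>\<gamma>\<in>U. (norm (poly_of_mshift a A x \<gamma>))\<^sup>2) \<le> S\<^sup>2 * (\<Sum>\<gamma>\<in>U. (norm (x \<gamma>))\<^sup>2)"
proof -
  have "(\<Sum>\<gamma>\<in>U. (norm (poly_of_mshift a A x \<gamma>))\<^sup>2)
      = (\<Sum>k\<in>UNIV. \<Sum>\<gamma>\<in>U. (cmod (poly_of_mshift a A x \<gamma> $ k))\<^sup>2)"
    by (simp add: power2_norm_vec sum.swap[of _ U])
  also have "\<dots> \<le> (\<Sum>k\<in>UNIV. S\<^sup>2 * (\<Sum>\<gamma>\<in>U. (cmod (x \<gamma> $ k))\<^sup>2))"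
    by (intro sum_mono diag_multishift_coord_sum_sq_le assms)
  also have "\<dots> = S\<^sup>2 * (\<Sum>\<gamma>\<in>U. (norm (x \<gamma>))\<^sup>2)"
    by (simp add: power2_norm_vec sum.swap[of _ U] sum_distrib_left)
  finally show ?thesis .
qed

end

theorem corollary3p5:
  fixes A :: "'d::{finite,linorder} \<Rightarrow> ('d \<Rightarrow> nat) \<Rightarrow> complex^'n^'n"
  assumes "commuting_multishift_weights A"
    and "contractive_multishift A"
    and "\<And>j \<alpha>. is_diag_matrix (A j \<alpha>)"
    and "\<And>j \<alpha>. invertible (A j \<alpha>)"
  shows "\<forall>a x. is_poly_coeffs a \<longrightarrow> in_l2 x \<longrightarrow>
           l2norm (poly_of_mshift a A x)
             \<le> (SUP z\<in>polydisc. norm (poly_eval a z)) * l2norm x"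
proof (intro allI impI)
  fix a :: "('d \<Rightarrow> nat) \<Rightarrow> complex" and x :: "('d \<Rightarrow> nat) \<Rightarrow> complex^'n"
  assume "is_poly_coeffs a" "in_l2 x"
  let ?S = "SUP z\<in>polydisc. norm (poly_eval a z)"
  have torus_bound: "norm (poly_eval a \<omega>) \<le> ?S" if "\<And>j. norm (\<omega> j) = 1" for \<omega>
    using that by (rule poly_eval_torus_le_Sup_polydisc)
  have "norm (poly_eval a (\<lambda>_. 1)) \<le> ?S" by (rule torus_bound) simp
  then have "0 \<le> ?S" by (rule order_trans[OF norm_ge_zero])
  show "l2norm (poly_of_mshift a A x) \<le> ?S * l2norm x"
    using \<open>is_poly_coeffs a\<close> unfolding is_poly_coeffs_def
    by (intro l2norm_le_if_down_closed_sums_le[OF \<open>in_l2 x\<close> \<open>0 \<le> ?S\<close>]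
        diag_multishift_sum_sq_le[OF assms _ torus_bound])
qed

end
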